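(* Fix $i\in\{1,\dots,d\}$ and let $0\le\alpha\le 1/h_i$ and $0\le\beta\le 2/h_i-\alpha$. Then for all $n\ge1$, $$(\eta_n^i)^2\le\min\Big\{\frac{2(\eta_1^i)^2}{\alpha h_i},\ \frac{8(\eta_1^i)^2\,n}{(\alpha+\beta)h_i},\ \frac{16(\eta_1^i)^2}{(\alpha+\beta)^2h_i^2}\Big\},$$ where a term with zero denominator is interpreted as $+\infty$.
   Context: Let $H\in\mathbb{R}^{d\times d}$ be symmetric positive definite with eigenvalues $h_1\le\dots\le h_d$ (all $>0$) and orthonormal eigenvectors $p_1,\dots,p_d$. Let $q\in\mathbb{R}^d$, $\theta_*=H^{-1}q$. For parameters $\alpha,\beta$, given $\theta_0$, set $\theta_1=\theta_0$ and for $n\ge1$ $\theta_{n+1}=\frac{2n}{n+1}\theta_n-\frac{n-1}{n+1}\theta_{n-1}-\frac{1}{n+1}\big(n(\alpha+\beta)H(\theta_n-\theta_* )-(n-1)\beta H(\theta_{n-1}-\theta_* )\big)$. Let $\eta_n=n(\theta_n-\theta_* )$, so that $\eta_0=0$, $\eta_1=\theta_0-\theta_*$ and $\eta_{n+1}=(I-\alpha H)\eta_n+(I-\beta H)(\eta_n-\eta_{n-1})$; write $\eta_n^i=p_i^\top\eta_n$. *)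

theory Defs
  imports "HOL-Analysis.Analysis"
begin

definition theta_star :: "real^'d^'d \<Rightarrow> real^'d \<Rightarrow> real^'d" where
  "theta_star H q = matrix_inv H *v q"

fun nag_theta :: "real^'d^'d \<Rightarrow> real^'d \<Rightarrow> real \<Rightarrow> real \<Rightarrow> real^'d \<Rightarrow> nat \<Rightarrow> real^'d" where
  "nag_theta H q \<alpha> \<beta> \<theta>0 0 = \<theta>0"
| "nag_theta H q \<alpha> \<beta> \<theta>0 (Suc 0) = \<theta>0"
| "nag_theta H q \<alpha> \<beta> \<theta>0 (Suc (Suc n)) =
     (let m = real (Suc n);
          ts = theta_star H q;
          a = nag_theta H q \<alpha> \<beta> \<theta>0 (Suc n);
          b = nag_theta H q \<alpha> \<beta> \<theta>0 n
      in (2 * m / (m + 1)) *\<^sub>R a - ((m - 1) / (m + 1)) *\<^sub>R b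
         - (1 / (m + 1)) *\<^sub>R ((m * (\<alpha> + \<beta>)) *\<^sub>R (H *v (a - ts))
                                 - ((m - 1) * \<beta>) *\<^sub>R (H *v (b - ts))))"

definition nag_eta :: "real^'d^'d \<Rightarrow> real^'d \<Rightarrow> real \<Rightarrow> real \<Rightarrow> real^'d \<Rightarrow> nat \<Rightarrow> real^'d" where
  "nag_eta H q \<alpha> \<beta> \<theta>0 n = real n *\<^sub>R (nag_theta H q \<alpha> \<beta> \<theta>0 n - theta_star H q)"

end

theory Submission
  imports Defs
begin

text \<open>Along the eigenvector \<open>p i\<close>, with \<open>a = \<alpha> h i\<close> and \<open>b = \<beta> h i\<close>, the iteration becomes
  the scalar recurrence \<open>x (n+2) = (2 - a - b) x (n+1) - (1 - b) x n\<close> with \<open>x 0 = 0\<close>.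
  Its solution is \<open>x 1\<close> times a Lucas sequence of the characteristic roots, which lie in the
  closed unit disc; this gives \<open>|x n| \<le> n |x 1|\<close>. When the roots are real, the Lucas sequence
  is moreover nonnegative and bounded by \<open>2 / (a + b)\<close>. The bound \<open>a (x n)\<^sup>2 \<le> 2 (x 1)\<^sup>2\<close>
  comes from a quadratic Lyapunov function, which is nonincreasing when \<open>b \<ge> a / 2\<close> and
  contracts by exactly \<open>1 - b\<close> when \<open>b < a / 2\<close>; it also controls \<open>(a + b) |x n|\<close> when the
  roots are complex, since then \<open>(a + b)\<^sup>2 < 4 a\<close>.\<close>

text \<open>\<open>lucas_U r1 r2 n = (\<Sum>k<n. r1 ^ k * r2 ^ (n - 1 - k))\<close> is the Lucas sequence
  \<open>U n (r1 + r2, r1 r2)\<close>, i.e. \<open>(r1 ^ n - r2 ^ n) / (r1 - r2)\<close> for distinct roots.\<close>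

fun lucas_U :: "'a::comm_ring_1 \<Rightarrow> 'a \<Rightarrow> nat \<Rightarrow> 'a" where
  "lucas_U r1 r2 0 = 0"
| "lucas_U r1 r2 (Suc n) = r2 * lucas_U r1 r2 n + r1 ^ n"

lemma lucas_U_Suc_Suc:
  "lucas_U r1 r2 (Suc (Suc n)) = (r1 + r2) * lucas_U r1 r2 (Suc n) - r1 * r2 * lucas_U r1 r2 n"
proof -
  have "r1 ^ Suc n = r1 * (lucas_U r1 r2 (Suc n) - r2 * lucas_U r1 r2 n)" by simp
  then show ?thesis by (simp add: algebra_simps)
qed

lemma lucas_U_unique:
  fixes Y :: "nat \<Rightarrow> 'a::comm_ring_1"
  assumes "Y 0 = 0" and "\<And>n. Y (Suc (Suc n)) = (r1 + r2) * Y (Suc n) - r1 * r2 * Y n"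
  shows "Y n = Y 1 * lucas_U r1 r2 n"
proof -
  have "Y n = Y 1 * lucas_U r1 r2 n \<and> Y (Suc n) = Y 1 * lucas_U r1 r2 (Suc n)"
  proof (induction n)
    case 0
    then show ?case using assms by simp
  next
    case (Suc n)
    then show ?case using assms(2)[of n] lucas_U_Suc_Suc[of r1 r2 n] by (simp add: algebra_simps)
  qed
  then show ?thesis by simp
qed

lemma norm_lucas_U_le:
  fixes r1 r2 :: "'a::real_normed_field"
  assumes "norm r1 \<le> 1" "norm r2 \<le> 1"
  shows "norm (lucas_U r1 r2 n) \<le> real n"
proof (induction n)
  case 0
  then show ?case by simp
next
  case (Suc n)
  have "norm (lucas_U r1 r2 (Suc n)) \<le> norm r2 * norm (lucas_U r1 r2 n) + norm r1 ^ n"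
    by (metis lucas_U.simps(2) norm_mult norm_power norm_triangle_ineq)
  also have "\<dots> \<le> 1 * real n + 1"
    by (intro add_mono mult_mono Suc power_le_one) (use assms in auto)
  finally show ?case by simp
qed

lemma lucas_U_bound_nonneg_roots:
  fixes r1 r2 :: real
  assumes "0 \<le> r2" "r2 \<le> r1" "r1 \<le> 1"
  shows "0 \<le> lucas_U r1 r2 n \<and> (1 - r2) * lucas_U r1 r2 n \<le> 1"
proof (induction n)
  case 0
  then show ?case by simp
next
  case (Suc n)
  have pow: "r1 ^ n \<le> 1" "0 \<le> r1 ^ n" using assms by (auto intro: power_le_one)
  have "(1 - r2) * lucas_U r1 r2 (Suc n) = r2 * ((1 - r2) * lucas_U r1 r2 n) + (1 - r2) * r1 ^ n"
    by (simp add: algebra_simps)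
  also have "\<dots> \<le> r2 * 1 + (1 - r2) * 1"
    by (intro add_mono mult_left_mono) (use Suc assms pow in auto)
  finally show ?case using Suc assms pow by simp
qed

lemma lucas_U_bound_nonpos_root:
  fixes r1 r2 :: real
  assumes "r2 \<le> 0" "0 \<le> r1 + r2" "r1 \<le> 1"
  shows "0 \<le> lucas_U r1 r2 (Suc n) \<and> lucas_U r1 r2 (Suc n) \<le> r1 ^ n"
proof (induction n)
  case 0
  then show ?case by simp
next
  case (Suc n)
  have "r2 * r1 ^ n \<le> r2 * lucas_U r1 r2 (Suc n)" "r2 * lucas_U r1 r2 (Suc n) \<le> 0"
    using Suc assms by (simp_all add: mult_left_mono_neg mult_nonpos_nonneg)
  moreover have "0 \<le> (r1 + r2) * r1 ^ n" using assms by simp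
  ultimately show ?case by (simp add: algebra_simps)
qed

lemma lucas_U_bound_real_roots:
  fixes r1 r2 :: real
  assumes "r2 \<le> r1" "r1 \<le> 1" "0 \<le> r1 + r2"
  shows "0 \<le> lucas_U r1 r2 n \<and> (2 - r1 - r2) * lucas_U r1 r2 n \<le> 2"
proof (cases "0 \<le> r2")
  case True
  then have U: "0 \<le> lucas_U r1 r2 n \<and> (1 - r2) * lucas_U r1 r2 n \<le> 1"
    using assms lucas_U_bound_nonneg_roots by blast
  have "(2 - r1 - r2) / 2 * lucas_U r1 r2 n \<le> (1 - r2) * lucas_U r1 r2 n"
    using U assms by (intro mult_right_mono) auto
  then show ?thesis using U by simp
next
  case False
  have U: "0 \<le> lucas_U r1 r2 n \<and> lucas_U r1 r2 n \<le> 1"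
  proof (cases n)
    case (Suc m)
    then show ?thesis
      using lucas_U_bound_nonpos_root[of r2 r1 m] power_le_one[of r1 m] False assms by auto
  qed simp
  then show ?thesis
    using mult_mono[of "2 - r1 - r2" 2 "lucas_U r1 r2 n" 1] assms by auto
qed

locale momentum_recurrence =
  fixes X :: "nat \<Rightarrow> real" and a b :: real
  assumes X_0: "X 0 = 0"
    and X_Suc_Suc: "\<And>n. X (Suc (Suc n)) = (1 - a) * X (Suc n) + (1 - b) * (X (Suc n) - X n)"
    and a_nonneg: "0 \<le> a" and a_le_1: "a \<le> 1"
    and b_nonneg: "0 \<le> b" and a_plus_b_le_2: "a + b \<le> 2"
begin

lemma X_Suc_Suc_char: "X (Suc (Suc n)) = (2 - a - b) * X (Suc n) - (1 - b) * X n"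
  by (simp add: X_Suc_Suc algebra_simps)

lemma X_eq_lucas_U:
  fixes r1 r2 :: "'a::{comm_ring_1, real_algebra_1}"
  assumes "r1 + r2 = of_real (2 - a - b)" "r1 * r2 = of_real (1 - b)"
  shows "of_real (X n) = of_real (X 1) * lucas_U r1 r2 n"
proof (rule lucas_U_unique)
  show "of_real (X (Suc (Suc n))) = (r1 + r2) * of_real (X (Suc n)) - r1 * r2 * of_real (X n)"
    for n :: nat
    unfolding assms X_Suc_Suc_char by simp
qed (simp add: X_0)

lemma real_char_roots:
  assumes "4 * a \<le> (a + b) ^ 2"
  obtains r1 r2 :: real where "r1 + r2 = 2 - a - b" "r1 * r2 = 1 - b"
    "r2 \<le> r1" "r1 \<le> 1" "0 \<le> r1 + r2"
proof -
  define w where "w = sqrt ((a + b) ^ 2 - 4 * a)"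
  have w0: "0 \<le> w" and w2: "w ^ 2 = (a + b) ^ 2 - 4 * a" using assms by (simp_all add: w_def)
  have "w \<le> a + b"
    by (rule power2_le_imp_le) (use w2 a_nonneg b_nonneg in auto)
  moreover have "(2 - a - b + w) / 2 * ((2 - a - b - w) / 2) = 1 - b"
    using w2 by (simp add: power2_eq_square field_simps)
  ultimately show ?thesis
    using that[of "(2 - a - b + w) / 2" "(2 - a - b - w) / 2"] w0 a_plus_b_le_2
    by (simp add: field_simps)
qed

lemma char_roots_in_unit_disc:
  obtains r1 r2 :: complex where "r1 + r2 = of_real (2 - a - b)" "r1 * r2 = of_real (1 - b)"
    "norm r1 \<le> 1" "norm r2 \<le> 1"
proof (cases "4 * a \<le> (a + b) ^ 2")
  case True
  then obtain r1 r2 where "r1 + r2 = 2 - a - b" "r1 * r2 = 1 - b" "r2 \<le> r1" "r1 \<le> 1" "0 \<le> r1 + r2"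
    by (rule real_char_roots)
  then show ?thesis
    by (intro that[of "of_real r1" "of_real r2"]) (simp_all flip: of_real_add of_real_mult)
next
  case False
  define w where "w = sqrt (4 * a - (a + b) ^ 2)"
  define r where "r = Complex ((2 - a - b) / 2) (w / 2)"
  have "w ^ 2 = 4 * a - (a + b) ^ 2" using False by (simp add: w_def)
  then have norm_sq: "((2 - a - b) / 2) ^ 2 + (w / 2) ^ 2 = 1 - b"
    by (simp add: power_divide power2_eq_square field_simps)
  have b_le_1: "b \<le> 1"
  proof (rule ccontr)
    assume "\<not> b \<le> 1"
    then have "(a + 1) ^ 2 \<le> (a + b) ^ 2" using a_nonneg by (intro power_mono) auto
    moreover have "4 * a \<le> (a + 1) ^ 2"
      using zero_le_power2[of "a - 1"] by (simp add: power2_eq_square algebra_simps)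
    ultimately show False using False by linarith
  qed
  show ?thesis
  proof (rule that[of r "cnj r"])
    show "r + cnj r = of_real (2 - a - b)" by (simp add: r_def complex_eq_iff)
    show "r * cnj r = of_real (1 - b)" using norm_sq by (simp add: r_def complex_eq_iff power2_eq_square)
    show "norm r \<le> 1" "norm (cnj r) \<le> 1"
      using norm_sq b_nonneg b_le_1 by (simp_all add: r_def complex_norm)
  qed
qed

lemma abs_le_linear: "\<bar>X n\<bar> \<le> real n * \<bar>X 1\<bar>"
proof -
  obtain r1 r2 :: complex where roots: "r1 + r2 = of_real (2 - a - b)" "r1 * r2 = of_real (1 - b)"
    and unit: "norm r1 \<le> 1" "norm r2 \<le> 1"
    by (rule char_roots_in_unit_disc)
  have "\<bar>X n\<bar> = \<bar>X 1\<bar> * norm (lucas_U r1 r2 n)"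
    using arg_cong[OF X_eq_lucas_U[OF roots, of n], of norm] by (simp add: norm_mult)
  also have "\<dots> \<le> \<bar>X 1\<bar> * real n" by (intro mult_left_mono norm_lucas_U_le unit) simp
  finally show ?thesis by (simp add: mult.commute)
qed

text \<open>\<open>(1 - a/2)\<close> times the decrease of the energy \<open>E\<close> below is a sum of squares,
  because \<open>(1 - a/2)\<^sup>2 \<ge> (1 - b)\<^sup>2\<close> when \<open>b \<ge> a / 2\<close>.\<close>

lemma energy_bound_large_momentum:
  assumes "a / 2 \<le> b"
  shows "a * X (Suc k) ^ 2 \<le> 2 * X 1 ^ 2"
proof -
  define p where "p = 1 - a / 2"
  define E where "E k = a * X (Suc k) ^ 2 + p * (X (Suc k) - X k) ^ 2" for k
  have p_pos: "0 < p" using a_le_1 by (simp add: p_def)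
  have p_dominates: "0 \<le> p ^ 2 - (1 - b) ^ 2"
  proof -
    have "1 - b \<le> p" "b - 1 \<le> p" using assms a_nonneg a_plus_b_le_2 by (auto simp: p_def)
    then have "0 \<le> (p - (1 - b)) * (p + (1 - b))" by simp
    then show ?thesis by (simp add: power2_eq_square algebra_simps)
  qed
  have E_decreasing: "E (Suc k) \<le> E k" for k
  proof -
    define u where "u = X (Suc k)"
    define v where "v = X (Suc k) - X k"
    have X_next: "X (Suc (Suc k)) = u + (1 - b) * v - a * u"
      by (simp add: X_Suc_Suc u_def v_def algebra_simps)
    have E_k: "E k = a * u ^ 2 + p * v ^ 2"
      and E_Suc: "E (Suc k) = a * (u + (1 - b) * v - a * u) ^ 2 + p * ((1 - b) * v - a * u) ^ 2"
      by (simp_all add: E_def X_next u_def v_def)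
    have "p * (E k - E (Suc k)) = a ^ 2 * (p * u + (1 - b) * v / 2) ^ 2 + (p ^ 2 - (1 - b) ^ 2) * v ^ 2"
      unfolding E_k E_Suc p_def by (simp add: power2_eq_square field_simps)
    also have "\<dots> \<ge> 0" using p_dominates by simp
    finally show ?thesis using p_pos by (simp add: zero_le_mult_iff)
  qed
  have "a * X (Suc k) ^ 2 \<le> E k" using p_pos by (simp add: E_def)
  also have "E k \<le> E 0" by (induction k) (use E_decreasing order_trans in blast)+
  also have "E 0 = (a + p) * X 1 ^ 2" using X_0 by (simp add: E_def algebra_simps)
  also have "\<dots> \<le> 2 * X 1 ^ 2" using a_le_1 by (intro mult_right_mono) (auto simp: p_def)
  finally show ?thesis .
qed

text \<open>The quadratic form \<open>Q\<close> below is multiplied by exactly \<open>1 - b\<close> at each step, and it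
  dominates \<open>a (X (Suc k))\<^sup>2 / 2\<close> because \<open>(b - a)\<^sup>2 \<le> 2 a (1 - b)\<close> when \<open>b < a / 2\<close>.\<close>

lemma energy_bound_small_momentum:
  assumes "b < a / 2"
  shows "a * X (Suc k) ^ 2 \<le> 2 * X 1 ^ 2"
proof -
  define t where "t = 1 - b"
  define Q where
    "Q k = a * X (Suc k) ^ 2 + (b - a) * X (Suc k) * (X (Suc k) - X k) + t * (X (Suc k) - X k) ^ 2"
    for k
  have t_bounds: "0 < t" "t \<le> 1" using assms b_nonneg a_le_1 by (auto simp: t_def)
  have Q_Suc: "Q (Suc k) = t * Q k" for k
  proof -
    define u where "u = X (Suc k)"
    define v where "v = X (Suc k) - X k"
    have X_next: "X (Suc (Suc k)) = u + t * v - a * u"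
      by (simp add: X_Suc_Suc u_def v_def t_def algebra_simps)
    have "Q (Suc k) = a * (u + t * v - a * u)^2 + (b - a) * (u + t * v - a * u) * (t * v - a * u)
        + t * (t * v - a * u)^2"
      by (simp add: Q_def X_next u_def)
    also have "\<dots> = t * (a * u^2 + (b - a) * u * v + t * v^2)" by (simp add: t_def) algebra
    finally show ?thesis by (simp add: Q_def u_def v_def)
  qed
  have "Q k = t ^ k * X 1 ^ 2" for k
  proof (induction k)
    case 0
    then show ?case by (simp add: Q_def X_0 t_def power2_eq_square algebra_simps)
  qed (simp add: Q_Suc)
  then have "Q k \<le> X 1 ^ 2" using t_bounds by (simp add: mult_left_le_one_le power_le_one)
  moreover have "a / 2 * X (Suc k) ^ 2 \<le> Q k"
  proof -
    define u where "u = X (Suc k)"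
    define v where "v = X (Suc k) - X k"
    have disc: "(b - a) ^ 2 \<le> 2 * a * t"
    proof -
      have "(b - a) ^ 2 \<le> a ^ 2" using assms b_nonneg by (simp add: abs_le_square_iff[symmetric])
      also have "a ^ 2 \<le> a" using a_nonneg a_le_1 by (simp add: power2_eq_square mult_left_le_one_le)
      also have "a \<le> 2 * a * t"
        using mult_nonneg_nonneg[of a "1 - 2 * b"] a_nonneg a_le_1 assms by (simp add: t_def algebra_simps)
      finally show ?thesis .
    qed
    have Q_k: "Q k = a * u ^ 2 + (b - a) * u * v + t * v ^ 2" by (simp add: Q_def u_def v_def)
    have "4 * t * (Q k - a / 2 * u ^ 2) = (2 * t * v + (b - a) * u) ^ 2 + (2 * a * t - (b - a) ^ 2) * u ^ 2"
      unfolding Q_k by (simp add: power2_eq_square field_simps)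
    also have "\<dots> \<ge> 0" using disc by simp
    finally show ?thesis using t_bounds by (simp add: zero_le_mult_iff u_def)
  qed
  ultimately show ?thesis by linarith
qed

lemma energy_bound: "a * X n ^ 2 \<le> 2 * X 1 ^ 2"
proof (cases n)
  case (Suc k)
  then show ?thesis
    using energy_bound_large_momentum energy_bound_small_momentum by (cases "a / 2 \<le> b") auto
qed (simp add: X_0)

lemma damped_abs_bound: "(a + b) * \<bar>X n\<bar> \<le> 4 * \<bar>X 1\<bar>"
proof (cases "4 * a \<le> (a + b) ^ 2")
  case True
  then obtain r1 r2 where roots: "r1 + r2 = 2 - a - b" "r1 * r2 = 1 - b"
    and "r2 \<le> r1" "r1 \<le> 1" "0 \<le> r1 + r2"
    by (rule real_char_roots)
  moreover have "2 - r1 - r2 = a + b" using roots by simp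
  ultimately have U: "0 \<le> lucas_U r1 r2 n" "(a + b) * lucas_U r1 r2 n \<le> 2"
    using lucas_U_bound_real_roots[of r2 r1 n] by auto
  have "r1 + r2 = of_real (2 - a - b)" "r1 * r2 = of_real (1 - b)" using roots by simp_all
  from X_eq_lucas_U[OF this, of n] have "X n = X 1 * lucas_U r1 r2 n" by simp
  then have "(a + b) * \<bar>X n\<bar> = \<bar>X 1\<bar> * ((a + b) * lucas_U r1 r2 n)"
    using U by (simp add: abs_mult)
  also have "\<dots> \<le> \<bar>X 1\<bar> * 2" using U by (intro mult_left_mono) auto
  finally show ?thesis by simp
next
  case False
  have "((a + b) * \<bar>X n\<bar>) ^ 2 = (a + b) ^ 2 * X n ^ 2" by (simp add: power_mult_distrib)
  also have "\<dots> \<le> (4 * a) * X n ^ 2" using False by (intro mult_right_mono) auto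
  also have "\<dots> \<le> 4 * (2 * X 1 ^ 2)" using energy_bound[of n] by simp
  also have "\<dots> \<le> (4 * \<bar>X 1\<bar>) ^ 2" by (simp add: power2_eq_square)
  finally show ?thesis by (rule power2_le_imp_le) simp
qed

lemma sq_bounds:
  shows "a \<noteq> 0 \<Longrightarrow> X n ^ 2 \<le> 2 * X 1 ^ 2 / a"
    and "a + b \<noteq> 0 \<Longrightarrow> X n ^ 2 \<le> 8 * X 1 ^ 2 * real n / (a + b)"
    and "a + b \<noteq> 0 \<Longrightarrow> X n ^ 2 \<le> 16 * X 1 ^ 2 / (a + b) ^ 2"
proof -
  show "a \<noteq> 0 \<Longrightarrow> X n ^ 2 \<le> 2 * X 1 ^ 2 / a"
    using energy_bound[of n] a_nonneg by (simp add: pos_le_divide_eq mult.commute)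
  assume "a + b \<noteq> 0"
  then have pos: "0 < a + b" using a_nonneg b_nonneg by simp
  have "(a + b) * X n ^ 2 = \<bar>X n\<bar> * ((a + b) * \<bar>X n\<bar>)" by (simp add: power2_eq_square)
  also have "\<dots> \<le> (real n * \<bar>X 1\<bar>) * (4 * \<bar>X 1\<bar>)"
    by (rule mult_mono[OF abs_le_linear damped_abs_bound]) (use pos in auto)
  also have "\<dots> \<le> 8 * X 1 ^ 2 * real n" by (simp add: power2_eq_square)
  finally show "X n ^ 2 \<le> 8 * X 1 ^ 2 * real n / (a + b)"
    using pos by (simp add: pos_le_divide_eq mult.commute)
  have "((a + b) * \<bar>X n\<bar>) ^ 2 \<le> (4 * \<bar>X 1\<bar>) ^ 2"
    using damped_abs_bound pos by (intro power_mono) auto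
  then show "X n ^ 2 \<le> 16 * X 1 ^ 2 / (a + b) ^ 2"
    using pos by (simp add: pos_le_divide_eq power_mult_distrib mult.commute)
qed

end

lemma nag_eta_0: "nag_eta H q \<alpha> \<beta> \<theta>0 0 = 0"
  by (simp add: nag_eta_def)

lemma mat_1_minus_scaleR_mult:
  fixes H :: "real^'n^'n"
  shows "(mat 1 - c *\<^sub>R H) *v x = x - c *\<^sub>R (H *v x)"
  by (simp add: matrix_vector_mult_diff_rdistrib scaleR_matrix_vector_assoc)

lemma nag_eta_Suc_Suc:
  "nag_eta H q \<alpha> \<beta> \<theta>0 (Suc (Suc n)) =
     (mat 1 - \<alpha> *\<^sub>R H) *v nag_eta H q \<alpha> \<beta> \<theta>0 (Suc n)
     + (mat 1 - \<beta> *\<^sub>R H) *v (nag_eta H q \<alpha> \<beta> \<theta>0 (Suc n) - nag_eta H q \<alpha> \<beta> \<theta>0 n)"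
proof -
  define m where "m = real (Suc n)"
  define ts where "ts = theta_star H q"
  define u where "u = nag_theta H q \<alpha> \<beta> \<theta>0 (Suc n) - ts"
  define v where "v = nag_theta H q \<alpha> \<beta> \<theta>0 n - ts"
  have m1: "m + 1 \<noteq> 0" by (simp add: m_def)
  have "nag_theta H q \<alpha> \<beta> \<theta>0 (Suc (Suc n)) - ts =
      (2 * m / (m + 1)) *\<^sub>R (u + ts) - ((m - 1) / (m + 1)) *\<^sub>R (v + ts) - ts
      - (1 / (m + 1)) *\<^sub>R ((m * (\<alpha> + \<beta>)) *\<^sub>R (H *v u) - ((m - 1) * \<beta>) *\<^sub>R (H *v v))"
    by (simp add: m_def ts_def u_def v_def Let_def)
  moreover have "(m + 1) * (2 * m / (m + 1)) = 2 * m" "(m + 1) * ((m - 1) / (m + 1)) = m - 1"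
    "(m + 1) * (1 / (m + 1) * x) = x" for x
    using m1 by simp_all
  ultimately have "(m + 1) *\<^sub>R (nag_theta H q \<alpha> \<beta> \<theta>0 (Suc (Suc n)) - ts) =
      (2 * m) *\<^sub>R (u + ts) - (m - 1) *\<^sub>R (v + ts) - (m + 1) *\<^sub>R ts
      - ((m * (\<alpha> + \<beta>)) *\<^sub>R (H *v u) - ((m - 1) * \<beta>) *\<^sub>R (H *v v))"
    by (simp only: scaleR_diff_right scaleR_scaleR)
  also have "\<dots> = (2 * m) *\<^sub>R u - (m - 1) *\<^sub>R v
      - (m * (\<alpha> + \<beta>)) *\<^sub>R (H *v u) + ((m - 1) * \<beta>) *\<^sub>R (H *v v)"
  proof -
    \<comment> \<open>the minimiser is a fixed point of the iteration, so its coefficients cancel\<close>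
    have "(2 * m) *\<^sub>R ts - (m - 1) *\<^sub>R ts - (m + 1) *\<^sub>R ts = 0"
      by (simp flip: scaleR_diff_left)
    then show ?thesis by (simp add: algebra_simps)
  qed
  finally have eta2: "nag_eta H q \<alpha> \<beta> \<theta>0 (Suc (Suc n)) = (2 * m) *\<^sub>R u - (m - 1) *\<^sub>R v
      - (m * (\<alpha> + \<beta>)) *\<^sub>R (H *v u) + ((m - 1) * \<beta>) *\<^sub>R (H *v v)"
    by (simp add: nag_eta_def m_def ts_def add.commute)
  have eta1: "nag_eta H q \<alpha> \<beta> \<theta>0 (Suc n) = m *\<^sub>R u"
    and eta0: "nag_eta H q \<alpha> \<beta> \<theta>0 n = (m - 1) *\<^sub>R v"
    by (simp_all add: nag_eta_def m_def u_def v_def ts_def)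
  show ?thesis
    unfolding eta2 eta1 eta0 mat_1_minus_scaleR_mult
    by (simp add: algebra_simps) (simp add: mult_2_right scaleR_2 flip: scaleR_scaleR)
qed

lemma inner_symmetric_eigenvector:
  fixes H :: "real^'n^'n"
  assumes "transpose H = H" "H *v w = \<mu> *\<^sub>R w"
  shows "w \<bullet> (H *v v) = \<mu> * (w \<bullet> v)"
proof -
  have "w \<bullet> (H *v v) = (transpose H *v w) \<bullet> v" by (simp add: dot_lmul_matrix)
  then show ?thesis using assms by simp
qed

lemma eigenvalue_pos_if_posdef:
  fixes H :: "real^'n^'n"
  assumes "\<forall>x. x \<noteq> 0 \<longrightarrow> x \<bullet> (H *v x) > 0" "H *v w = \<mu> *\<^sub>R w" "w \<noteq> 0"
  shows "0 < \<mu>"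
  using assms by (metis inner_scaleR_right inner_gt_zero_iff zero_less_mult_pos2)

theorem theorem2:
  fixes H :: "real^'d^'d" and q \<theta>0 :: "real^'d"
    and h :: "'d \<Rightarrow> real" and p :: "'d \<Rightarrow> real^'d"
    and \<alpha> \<beta> :: real and i :: 'd and n :: nat
  assumes symm: "transpose H = H"
    and posdef: "\<forall>x. x \<noteq> 0 \<longrightarrow> x \<bullet> (H *v x) > 0"
    and eig: "\<forall>j. H *v p j = h j *\<^sub>R p j"
    and orthonormal: "\<forall>j k. p j \<bullet> p k = (if j = k then 1 else 0)"
    and \<alpha>0: "0 \<le> \<alpha>" and \<alpha>1: "\<alpha> \<le> 1 / h i"
    and \<beta>0: "0 \<le> \<beta>" and \<beta>1: "\<beta> \<le> 2 / h i - \<alpha>"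
    and n1: "n \<ge> 1"
  shows "(\<alpha> * h i \<noteq> 0 \<longrightarrow>
           (p i \<bullet> nag_eta H q \<alpha> \<beta> \<theta>0 n)^2
             \<le> 2 * (p i \<bullet> nag_eta H q \<alpha> \<beta> \<theta>0 1)^2 / (\<alpha> * h i))
       \<and> ((\<alpha> + \<beta>) * h i \<noteq> 0 \<longrightarrow>
           (p i \<bullet> nag_eta H q \<alpha> \<beta> \<theta>0 n)^2
             \<le> 8 * (p i \<bullet> nag_eta H q \<alpha> \<beta> \<theta>0 1)^2 * real n / ((\<alpha> + \<beta>) * h i))
       \<and> ((\<alpha> + \<beta>)^2 * (h i)^2 \<noteq> 0 \<longrightarrow>
           (p i \<bullet> nag_eta H q \<alpha> \<beta> \<theta>0 n)^2
             \<le> 16 * (p i \<bullet> nag_eta H q \<alpha> \<beta> \<theta>0 1)^2 / ((\<alpha> + \<beta>)^2 * (h i)^2))"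
proof -
  have proj: "p i \<bullet> ((mat 1 - c *\<^sub>R H) *v v) = (1 - c * h i) * (p i \<bullet> v)" for c v
    using inner_symmetric_eigenvector[OF symm eig[rule_format, of i], of v]
    by (simp add: mat_1_minus_scaleR_mult inner_diff_right left_diff_distrib)
  have "p i \<noteq> 0" using orthonormal by (metis inner_zero_left zero_neq_one)
  then have h_pos: "0 < h i" using eigenvalue_pos_if_posdef posdef eig by blast
  interpret momentum_recurrence "\<lambda>k. p i \<bullet> nag_eta H q \<alpha> \<beta> \<theta>0 k" "\<alpha> * h i" "\<beta> * h i"
  proof
    show "\<alpha> * h i \<le> 1" using \<alpha>1 h_pos by (simp add: pos_le_divide_eq)
    show "\<alpha> * h i + \<beta> * h i \<le> 2" using \<beta>1 h_pos by (simp add: pos_le_divide_eq algebra_simps)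
  qed (simp_all add: nag_eta_0 nag_eta_Suc_Suc proj inner_add_right inner_diff_right,
       use \<alpha>0 \<beta>0 h_pos in auto)
  have "(\<alpha> + \<beta>) * h i = \<alpha> * h i + \<beta> * h i" "(\<alpha> + \<beta>)^2 * (h i)^2 = (\<alpha> * h i + \<beta> * h i)^2"
    by (simp_all add: distrib_right flip: power_mult_distrib)
  then show ?thesis
    using sq_bounds[of n] by auto
qed

end
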